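(* Let $T>0$ and let $\boldsymbol\rho=(\rho_1,\rho_2)\in C^{1,2}([0,T)\times\mathbb T^d;\mathbb R^2)$ be a classical solution of the species-blind system $$\partial_t\rho_i=\Delta\Big(\rho_i\frac{\hat\Phi(\rho_1+\rho_2)}{\rho_1+\rho_2}\Big),\quad i=1,2,$$ with initial condition $\boldsymbol\rho_0\in C(\mathbb T^d;\mathbb R_+^2)$ satisfying $\boldsymbol\rho_0(\mathbb T^d)\subset A=\{\boldsymbol\rho\in(0,\infty)^2:\rho_1+\rho_2<\hat\rho_c\}$. Then $$0<\inf_{(t,u)\in[0,T)\times\mathbb T^d}\min(\rho_1,\rho_2)(t,u)\le\sup_{(t,u)\in[0,T)\times\mathbb T^d}(\rho_1+\rho_2)(t,u)<\hat\rho_c.$$ In particular, there is $\delta>0$ such that $\boldsymbol\rho(t,\mathbb T^d)\subset\{\mathbf r\in A: d(\mathbf r,\partial A)>\delta\}$ for all $t\in[0,T)$.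
   Context: Let $\hat g:\mathbb N_0\to\mathbb R_+$ be a one-species jump rate: $\hat g(0)=0$, $\hat g(k)>0$ for $k\ge1$, $\sup_k|\hat g(k+1)-\hat g(k)|<\infty$, and $\hat g!(k)^{1/k}$ converges as $k\to\infty$ to a limit in $(0,+\infty]$, where $\hat g!(k)=\hat g(1)\cdots\hat g(k)$. $\hat Z(\varphi)=\sum_k\varphi^k/\hat g!(k)$, $\hat R(\varphi)=\varphi\hat Z'(\varphi)/\hat Z(\varphi)$, $\hat\rho_c\in(0,+\infty]$ the supremum of $\hat R$ (critical density), $\hat\Phi=\hat R^{-1}$ on $[0,\hat\rho_c)$. A classical solution of the species-blind system on $[0,T)\times\mathbb T^d$ is a $C^{1,2}$ function satisfying the system with $0\le\rho_1+\rho_2<\hat\rho_c$ everywhere. *)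

theory Defs
  imports "HOL-Analysis.Analysis"
begin

definition gfact :: "(nat \<Rightarrow> real) \<Rightarrow> nat \<Rightarrow> real" where
  "gfact g k = (\<Prod>i\<in>{1..k}. g i)"

definition jump_rate :: "(nat \<Rightarrow> real) \<Rightarrow> bool" where
  "jump_rate g \<longleftrightarrow>
     g 0 = 0 \<and> (\<forall>k\<ge>1. g k > 0) \<and>
     (\<exists>C. \<forall>k. \<bar>g (k+1) - g k\<bar> \<le> C) \<and>
     ((\<exists>L>0. (\<lambda>k. root k (gfact g k)) \<longlonglongrightarrow> L) \<or>
      filterlim (\<lambda>k. root k (gfact g k)) at_top sequentially)"

text \<open>Radius of convergence of Z (equals the limit of (g!(k))^(1/k)).\<close>
definition phi_star :: "(nat \<Rightarrow> real) \<Rightarrow> ereal" where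
  "phi_star g = conv_radius (\<lambda>k. 1 / gfact g k)"

definition Zg :: "(nat \<Rightarrow> real) \<Rightarrow> real \<Rightarrow> real" where
  "Zg g \<phi> = (\<Sum>k. \<phi> ^ k / gfact g k)"

definition Rg :: "(nat \<Rightarrow> real) \<Rightarrow> real \<Rightarrow> real" where
  "Rg g \<phi> = \<phi> * deriv (Zg g) \<phi> / Zg g \<phi>"

definition fug_dom :: "(nat \<Rightarrow> real) \<Rightarrow> real set" where
  "fug_dom g = {\<phi>. 0 \<le> \<phi> \<and> ereal \<phi> < phi_star g}"

definition rho_c :: "(nat \<Rightarrow> real) \<Rightarrow> ereal" where
  "rho_c g = (SUP \<phi>\<in>fug_dom g. ereal (Rg g \<phi>))"

definition Phig :: "(nat \<Rightarrow> real) \<Rightarrow> real \<Rightarrow> real" where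
  "Phig g r = (THE \<phi>. \<phi> \<in> fug_dom g \<and> Rg g \<phi> = r)"

text \<open>Species-blind flux coefficient rho_i * Phi(rho_1+rho_2)/(rho_1+rho_2); at total
  density 0 we use its continuous extension g(1)*rho_i (since Phi(s) ~ g(1) s).\<close>
definition flux :: "(nat \<Rightarrow> real) \<Rightarrow> real \<Rightarrow> real \<Rightarrow> real" where
  "flux g ri s = (if s = 0 then g 1 * ri else ri * Phig g s / s)"

text \<open>Functions on T^d = R^d / Z^d are represented as Z^d-periodic functions on R^d.\<close>
definition periodic_fun :: "(real^'d \<Rightarrow> 'b) \<Rightarrow> bool" where
  "periodic_fun f \<longleftrightarrow> (\<forall>x j. f (x + axis j 1) = f x)"

definition C12 :: "real \<Rightarrow> (real \<Rightarrow> real^'d \<Rightarrow> real) \<Rightarrow> bool" where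
  "C12 T f \<longleftrightarrow> (\<forall>t\<in>{0..<T}. periodic_fun (f t)) \<and>
    (\<exists>ft D D2.
      (\<forall>t\<in>{0..<T}. \<forall>x.
         ((\<lambda>s. f s x) has_real_derivative ft t x) (at t within {0..<T}) \<and>
         (\<forall>j. ((\<lambda>h. f t (x + h *\<^sub>R axis j 1)) has_real_derivative D j t x) (at 0)) \<and>
         (\<forall>j k. ((\<lambda>h. D j t (x + h *\<^sub>R axis k 1)) has_real_derivative D2 j k t x) (at 0))) \<and>
      continuous_on ({0..<T} \<times> UNIV) (\<lambda>(t,x). f t x) \<and>
      continuous_on ({0..<T} \<times> UNIV) (\<lambda>(t,x). ft t x) \<and>
      (\<forall>j. continuous_on ({0..<T} \<times> UNIV) (\<lambda>(t,x). D j t x)) \<and>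
      (\<forall>j k. continuous_on ({0..<T} \<times> UNIV) (\<lambda>(t,x). D2 j k t x)))"

definition heat_eq_at :: "(real \<Rightarrow> real^'d \<Rightarrow> real) \<Rightarrow> (real \<Rightarrow> real^'d \<Rightarrow> real)
    \<Rightarrow> real \<Rightarrow> real \<Rightarrow> real^'d \<Rightarrow> bool" where
  "heat_eq_at f w T t x \<longleftrightarrow>
    (\<exists>ft Dw D2w.
       ((\<lambda>s. f s x) has_real_derivative ft) (at t within {0..<T}) \<and>
       (\<forall>j y. ((\<lambda>h. w t (y + h *\<^sub>R axis j 1)) has_real_derivative Dw j y) (at 0)) \<and>
       (\<forall>j. ((\<lambda>h. Dw j (x + h *\<^sub>R axis j 1)) has_real_derivative D2w j) (at 0)) \<and>
       ft = (\<Sum>j\<in>UNIV. D2w j))"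

definition species_blind_solution ::
  "(nat \<Rightarrow> real) \<Rightarrow> real \<Rightarrow> (real \<Rightarrow> real^'d \<Rightarrow> real) \<Rightarrow> (real \<Rightarrow> real^'d \<Rightarrow> real) \<Rightarrow> bool" where
  "species_blind_solution g T rho1 rho2 \<longleftrightarrow>
     C12 T rho1 \<and> C12 T rho2 \<and>
     (\<forall>t\<in>{0..<T}. \<forall>x. 0 \<le> rho1 t x + rho2 t x \<and> ereal (rho1 t x + rho2 t x) < rho_c g) \<and>
     (\<forall>t\<in>{0..<T}. \<forall>x.
        heat_eq_at rho1 (\<lambda>s y. flux g (rho1 s y) (rho1 s y + rho2 s y)) T t x \<and>
        heat_eq_at rho2 (\<lambda>s y. flux g (rho2 s y) (rho1 s y + rho2 s y)) T t x)"

definition admissible :: "(nat \<Rightarrow> real) \<Rightarrow> (real \<times> real) set" where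
  "admissible g = {(r1, r2). 0 < r1 \<and> 0 < r2 \<and> ereal (r1 + r2) < rho_c g}"

end

theory Submission
  imports Defs
begin

text \<open>The total density \<open>s = \<rho>\<^sub>1 + \<rho>\<^sub>2\<close> solves the scalar equation \<open>\<partial>\<^sub>t s = \<Delta> \<Phi>(s)\<close>, and
  \<open>\<Phi>\<close> is nondecreasing because \<open>R(\<phi>) = \<phi> Z'(\<phi>) / Z(\<phi>)\<close>, the mean of a power series
  with positive weights, is strictly increasing. The maximum principle on the torus therefore
  keeps \<open>s\<close> between the minimum and the maximum of the initial total density, i.e. inside a
  compact subinterval of \<open>(0, \<rho>\<^sub>c)\<close>. The concentration \<open>c = \<rho>\<^sub>1 / s\<close> obeys a maximum
  principle as well, so it stays below its initial maximum, which is \<open>< 1\<close>; symmetrically for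
  \<open>\<rho>\<^sub>2 / s\<close>. Hence each \<open>\<rho>\<^sub>i \<ge> (1 - max c\<^sub>j) min s\<^sub>0 > 0\<close>, and the solution stays a
  uniform distance away from the boundary of the admissible set.\<close>

section \<open>Power series with positive coefficients\<close>

lemma conv_radius_le_diffs:
  fixes a :: "nat \<Rightarrow> 'a :: {banach, real_normed_field}"
  shows "conv_radius a \<le> conv_radius (diffs a)"
proof -
  have "diffs a = fps_nth (fps_deriv (Abs_fps a))"
    by (simp add: fun_eq_iff diffs_def)
  then show ?thesis
    using fps_conv_radius_deriv[of "Abs_fps a"] by (simp add: fps_conv_radius_def)
qed

lemma diffs_powser_sums:
  fixes a :: "nat \<Rightarrow> 'a :: real_normed_field"
  assumes "summable (\<lambda>n. diffs a n * x ^ n)"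
  shows "(\<lambda>n. of_nat n * a n * x ^ n) sums (x * (\<Sum>n. diffs a n * x ^ n))"
proof -
  have "(\<lambda>n. x * (diffs a n * x ^ n)) sums (x * (\<Sum>n. diffs a n * x ^ n))"
    using summable_sums[OF assms] by (rule sums_mult)
  moreover have "(\<lambda>n. x * (diffs a n * x ^ n)) = (\<lambda>n. of_nat (Suc n) * a (Suc n) * x ^ Suc n)"
    by (simp add: fun_eq_iff diffs_def algebra_simps)
  ultimately show ?thesis
    using sums_Suc_iff[of "\<lambda>n. of_nat n * a n * x ^ n"] by simp
qed

lemma power_cross_diff_nonneg:
  fixes p q :: real
  assumes "0 \<le> p" "p \<le> q"
  shows "0 \<le> (real k - real j) * (q ^ k * p ^ j - p ^ k * q ^ j)"
proof (cases "j \<le> k")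
  case True
  have "q ^ k * p ^ j - p ^ k * q ^ j = p ^ j * q ^ j * (q ^ (k - j) - p ^ (k - j))"
    using True by (simp add: algebra_simps flip: power_add)
  also have "\<dots> \<ge> 0"
    using assms by (intro mult_nonneg_nonneg power_mono) (auto intro: power_mono)
  finally show ?thesis using True by simp
next
  case False
  have "p ^ k * q ^ j - q ^ k * p ^ j = p ^ k * q ^ k * (q ^ (j - k) - p ^ (j - k))"
    using False by (simp add: algebra_simps flip: power_add)
  also have "\<dots> \<ge> 0"
    using assms by (intro mult_nonneg_nonneg power_mono) (auto intro: power_mono)
  finally show ?thesis using False by (simp add: mult_nonpos_nonpos)
qed

text \<open>Symmetrising the double sum over \<open>(k, j)\<close> turns the cross difference into a sum of the
  nonnegative terms \<open>a\<^sub>k a\<^sub>j (k - j)(q\<^sup>k p\<^sup>j - p\<^sup>k q\<^sup>j) / 2\<close>; the pairs \<open>(0,1)\<close> and \<open>(1,0)\<close> alone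
  contribute \<open>a\<^sub>0 a\<^sub>1 (q - p)\<close>.\<close>
lemma truncated_powser_cross_ineq:
  fixes a :: "nat \<Rightarrow> real" and p q :: real
  assumes a: "\<And>k. a k > 0" and pq: "0 \<le> p" "p \<le> q" and M: "2 \<le> M"
  shows "a 0 * a 1 * (q - p) \<le> (\<Sum>k<M. real k * a k * q ^ k) * (\<Sum>j<M. a j * p ^ j)
             - (\<Sum>k<M. real k * a k * p ^ k) * (\<Sum>j<M. a j * q ^ j)"
proof -
  define F where "F k j = real k * a k * a j * (q ^ k * p ^ j - p ^ k * q ^ j)" for k j
  define G where "G k j = a k * a j * ((real k - real j) * (q ^ k * p ^ j - p ^ k * q ^ j))" for k j
  have "(\<Sum>k<M. real k * a k * q ^ k) * (\<Sum>j<M. a j * p ^ j)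
             - (\<Sum>k<M. real k * a k * p ^ k) * (\<Sum>j<M. a j * q ^ j) = (\<Sum>k<M. \<Sum>j<M. F k j)"
    unfolding sum_product sum_subtractf[symmetric] by (simp add: F_def algebra_simps)
  also have "\<dots> = (\<Sum>k<M. \<Sum>j<M. G k j) / 2"
  proof -
    have "G k j = F k j + F j k" for k j by (simp add: F_def G_def algebra_simps)
    then have "(\<Sum>k<M. \<Sum>j<M. G k j) = (\<Sum>k<M. \<Sum>j<M. F k j) + (\<Sum>k<M. \<Sum>j<M. F j k)"
      by (simp add: sum.distrib)
    also have "(\<Sum>k<M. \<Sum>j<M. F j k) = (\<Sum>k<M. \<Sum>j<M. F k j)" by (rule sum.swap)
    finally show ?thesis by simp
  qed
  finally have cross: "(\<Sum>k<M. real k * a k * q ^ k) * (\<Sum>j<M. a j * p ^ j)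
             - (\<Sum>k<M. real k * a k * p ^ k) * (\<Sum>j<M. a j * q ^ j) = (\<Sum>k<M. \<Sum>j<M. G k j) / 2" .
  have G_nonneg: "0 \<le> G k j" for k j
    unfolding G_def using a[of k] a[of j] power_cross_diff_nonneg[OF pq] by simp
  have "G 0 1 + G 1 0 \<le> (\<Sum>j<M. G 0 j) + (\<Sum>j<M. G 1 j)"
    using M G_nonneg by (intro add_mono member_le_sum) auto
  also have "\<dots> = (\<Sum>k\<in>{0,1}. \<Sum>j<M. G k j)" by simp
  also have "\<dots> \<le> (\<Sum>k<M. \<Sum>j<M. G k j)"
    using M G_nonneg by (intro sum_mono2 sum_nonneg) auto
  finally show ?thesis unfolding cross by (simp add: G_def algebra_simps)
qed

lemma powser_mean_strict_mono:
  fixes a :: "nat \<Rightarrow> real" and p q :: real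
  assumes a: "\<And>k. a k > 0" and pq: "0 \<le> p" "p < q"
    and summable: "summable (\<lambda>n. a n * p ^ n)" "summable (\<lambda>n. a n * q ^ n)"
      "summable (\<lambda>n. real n * a n * p ^ n)" "summable (\<lambda>n. real n * a n * q ^ n)"
  shows "(\<Sum>n. real n * a n * p ^ n) * (\<Sum>n. a n * q ^ n)
           < (\<Sum>n. real n * a n * q ^ n) * (\<Sum>n. a n * p ^ n)"
proof -
  have lim: "(\<lambda>M. (\<Sum>k<M. real k * a k * q ^ k) * (\<Sum>j<M. a j * p ^ j)
             - (\<Sum>k<M. real k * a k * p ^ k) * (\<Sum>j<M. a j * q ^ j))
      \<longlonglongrightarrow> (\<Sum>n. real n * a n * q ^ n) * (\<Sum>n. a n * p ^ n)
             - (\<Sum>n. real n * a n * p ^ n) * (\<Sum>n. a n * q ^ n)"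
    by (intro tendsto_diff tendsto_mult summable_LIMSEQ summable)
  have "a 0 * a 1 * (q - p) \<le> (\<Sum>n. real n * a n * q ^ n) * (\<Sum>n. a n * p ^ n)
             - (\<Sum>n. real n * a n * p ^ n) * (\<Sum>n. a n * q ^ n)"
    using pq by (intro LIMSEQ_le_const[OF lim] exI[of _ 2] allI impI truncated_powser_cross_ineq a) auto
  moreover have "0 < a 0 * a 1 * (q - p)" using a[of 0] a[of 1] pq by simp
  ultimately show ?thesis by linarith
qed

section \<open>The grand-canonical density and its inverse\<close>

definition zcoeff :: "(nat \<Rightarrow> real) \<Rightarrow> nat \<Rightarrow> real" where
  "zcoeff g k = 1 / gfact g k"

lemma gfact_pos: "\<forall>k\<ge>1. g k > 0 \<Longrightarrow> 0 < gfact g k"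
  unfolding gfact_def by (intro prod_pos) auto

lemma zcoeff_pos: "\<forall>k\<ge>1. g k > 0 \<Longrightarrow> 0 < zcoeff g k"
  by (simp add: zcoeff_def gfact_pos)

lemma Zg_powser: "Zg g x = (\<Sum>n. zcoeff g n * x ^ n)"
  by (simp add: Zg_def zcoeff_def)

context
  fixes g :: "nat \<Rightarrow> real" and x :: real
  assumes radius: "ereal \<bar>x\<bar> < phi_star g"
begin

lemma summable_zcoeff: "summable (\<lambda>n. zcoeff g n * x ^ n)"
  using radius by (intro summable_in_conv_radius) (simp add: phi_star_def zcoeff_def)

lemma summable_diffs_zcoeff: "summable (\<lambda>n. diffs (zcoeff g) n * x ^ n)"
  using radius conv_radius_le_diffs[of "zcoeff g"]
  by (intro summable_in_conv_radius) (auto simp: phi_star_def zcoeff_def)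

lemma Zg_has_field_derivative:
  "(Zg g has_field_derivative (\<Sum>n. diffs (zcoeff g) n * x ^ n)) (at x)"
  using radius unfolding Zg_powser[abs_def]
  by (intro has_field_derivative_powser) (simp add: phi_star_def zcoeff_def)

lemma isCont_Zg: "isCont (Zg g) x"
  using Zg_has_field_derivative by (rule DERIV_isCont)

lemma isCont_diffs_zcoeff_powser: "isCont (\<lambda>x. \<Sum>n. diffs (zcoeff g) n * x ^ n) x"
proof (rule DERIV_isCont[OF has_field_derivative_powser])
  show "ereal (norm x) < conv_radius (diffs (zcoeff g))"
    using radius conv_radius_le_diffs[of "zcoeff g"] by (simp add: phi_star_def zcoeff_def)
qed

lemma Rg_eq: "Rg g x = x * (\<Sum>n. diffs (zcoeff g) n * x ^ n) / Zg g x"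
  using DERIV_imp_deriv[OF Zg_has_field_derivative] by (simp add: Rg_def)

lemma Rg_numerator_sums:
  "(\<lambda>n. real n * zcoeff g n * x ^ n) sums (x * (\<Sum>n. diffs (zcoeff g) n * x ^ n))"
  using diffs_powser_sums[OF summable_diffs_zcoeff] by simp

lemma Zg_pos:
  assumes "\<forall>k\<ge>1. g k > 0" "0 \<le> x"
  shows "0 < Zg g x"
  unfolding Zg_powser
proof (rule suminf_pos2[where i = 0, OF summable_zcoeff])
  show "0 \<le> zcoeff g n * x ^ n" for n
    using zcoeff_pos[OF assms(1), of n] assms(2) by simp
qed (simp add: zcoeff_def gfact_def)

end

lemma open_radius_interval: "open {x::real. ereal \<bar>x\<bar> < r}"
  by (intro open_Collect_less continuous_intros)

lemma isCont_Rg: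
  assumes pos: "\<forall>k\<ge>1. g k > 0" and x: "0 \<le> x" "ereal x < phi_star g"
  shows "isCont (Rg g) x"
proof -
  let ?D = "\<lambda>x. \<Sum>n. diffs (zcoeff g) n * x ^ n"
  have "\<forall>\<^sub>F y in nhds x. y \<in> {y. ereal \<bar>y\<bar> < phi_star g}"
    using x by (intro eventually_nhds_in_open open_radius_interval) auto
  then have "\<forall>\<^sub>F y in nhds x. Rg g y = y * ?D y / Zg g y"
    by (rule eventually_mono) (simp add: Rg_eq)
  moreover have "isCont (\<lambda>y. y * ?D y / Zg g y) x"
    using x isCont_Zg isCont_diffs_zcoeff_powser Zg_pos[of x g] pos by (intro continuous_intros) auto
  ultimately show ?thesis by (simp add: isCont_cong)
qed

lemma Rg_strict_mono:
  assumes pos: "\<forall>k\<ge>1. g k > 0" and pq: "0 \<le> p" "p < q" and q: "ereal q < phi_star g"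
  shows "Rg g p < Rg g q"
proof -
  have radius: "ereal \<bar>p\<bar> < phi_star g" "ereal \<bar>q\<bar> < phi_star g"
    using pq q by (auto intro: le_less_trans[of _ "ereal q"])
  note numer = Rg_numerator_sums[OF radius(1)] Rg_numerator_sums[OF radius(2)]
  have "(\<Sum>n. real n * zcoeff g n * p ^ n) * Zg g q < (\<Sum>n. real n * zcoeff g n * q ^ n) * Zg g p"
    unfolding Zg_powser using zcoeff_pos[OF pos] pq numer[THEN sums_summable]
    by (intro powser_mean_strict_mono summable_zcoeff radius) auto
  then show ?thesis
    using Zg_pos[OF radius(1) pos pq(1)] Zg_pos[OF radius(2) pos] pq numer[THEN sums_unique]
    by (simp add: Rg_eq[OF radius(1)] Rg_eq[OF radius(2)] divide_simps mult.commute)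
qed

lemma Rg_zero: "Rg g 0 = 0"
  by (simp add: Rg_def)

lemma strict_mono_on_Rg: "\<forall>k\<ge>1. g k > 0 \<Longrightarrow> strict_mono_on (fug_dom g) (Rg g)"
  by (rule strict_mono_onI) (auto simp: fug_dom_def intro: Rg_strict_mono)

lemma ex1_fug_dom_Rg_eq:
  assumes pos: "\<forall>k\<ge>1. g k > 0" and r: "0 \<le> r" "ereal r < rho_c g"
  shows "\<exists>!\<phi>. \<phi> \<in> fug_dom g \<and> Rg g \<phi> = r"
proof -
  obtain p where p: "p \<in> fug_dom g" "r < Rg g p"
    using r(2) unfolding rho_c_def by (auto simp: less_SUP_iff)
  have "continuous_on {0..p} (Rg g)"
    using p(1) pos
    by (intro continuous_at_imp_continuous_on ballI isCont_Rg)
       (auto simp: fug_dom_def intro: le_less_trans[of _ "ereal p"])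
  then obtain \<phi> where "0 \<le> \<phi>" "\<phi> \<le> p" "Rg g \<phi> = r"
    using IVT'[of "Rg g" 0 r p] p r by (auto simp: Rg_zero fug_dom_def)
  then have \<phi>: "\<phi> \<in> fug_dom g \<and> Rg g \<phi> = r"
    using p(1) by (auto simp: fug_dom_def intro: le_less_trans[of _ "ereal p"])
  have inj: "inj_on (Rg g) (fug_dom g)"
    by (rule strict_mono_on_imp_inj_on[OF strict_mono_on_Rg[OF pos]])
  show ?thesis
  proof (rule ex1I[of _ \<phi>])
    fix \<psi> assume "\<psi> \<in> fug_dom g \<and> Rg g \<psi> = r"
    then show "\<psi> = \<phi>" using inj_onD[OF inj, of \<psi> \<phi>] \<phi> by simp
  qed (rule \<phi>)
qed

context
  fixes g :: "nat \<Rightarrow> real" and r :: real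
  assumes pos: "\<forall>k\<ge>1. g k > 0" and r: "0 \<le> r" "ereal r < rho_c g"
begin

lemma Phig_in_fug_dom: "Phig g r \<in> fug_dom g"
  using theI'[OF ex1_fug_dom_Rg_eq[OF pos r]] by (simp add: Phig_def)

lemma Rg_Phig: "Rg g (Phig g r) = r"
  using theI'[OF ex1_fug_dom_Rg_eq[OF pos r]] by (simp add: Phig_def)

lemma Phig_nonneg: "0 \<le> Phig g r"
  using Phig_in_fug_dom by (simp add: fug_dom_def)

end

lemma Phig_zero:
  assumes pos: "\<forall>k\<ge>1. g k > 0" and "0 < rho_c g"
  shows "Phig g 0 = 0"
proof -
  have dom: "Phig g 0 \<in> fug_dom g" and "Rg g (Phig g 0) = 0"
    using Phig_in_fug_dom[of g 0] Rg_Phig[of g 0] pos assms(2) by (auto simp: zero_ereal_def)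
  moreover from dom have "0 \<in> fug_dom g"
    by (auto simp: fug_dom_def intro: le_less_trans[of _ "ereal (Phig g 0)"])
  ultimately show ?thesis
    using inj_onD[OF strict_mono_on_imp_inj_on[OF strict_mono_on_Rg[OF pos]], of "Phig g 0" 0]
    by (simp add: Rg_zero)
qed

lemma Phig_mono:
  assumes pos: "\<forall>k\<ge>1. g k > 0" and r: "0 \<le> r1" "r1 \<le> r2" "ereal r2 < rho_c g"
  shows "Phig g r1 \<le> Phig g r2"
proof (rule ccontr)
  have r1: "ereal r1 < rho_c g" using r by (auto intro: le_less_trans[of _ "ereal r2"])
  assume "\<not> Phig g r1 \<le> Phig g r2"
  then have "Rg g (Phig g r2) < Rg g (Phig g r1)"
    using strict_mono_onD[OF strict_mono_on_Rg[OF pos] Phig_in_fug_dom Phig_in_fug_dom] pos r r1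
    by simp
  then show False
    using Rg_Phig[OF pos] r r1 by simp
qed

section \<open>Periodic functions and a maximum principle on the torus\<close>

lemma periodic_fun_add_int_axis:
  assumes "periodic_fun f"
  shows "f (x + of_int k *\<^sub>R axis j 1) = f x"
proof (induction k rule: int_induct[where k = 0])
  case (step1 i)
  have "f (x + of_int (i + 1) *\<^sub>R axis j 1) = f ((x + of_int i *\<^sub>R axis j 1) + axis j 1)"
    by (simp add: algebra_simps)
  also have "\<dots> = f (x + of_int i *\<^sub>R axis j 1)"
    using assms by (simp add: periodic_fun_def)
  finally show ?case using step1 by simp
next
  case (step2 i)
  have "f (x + of_int (i - 1) *\<^sub>R axis j 1) = f ((x + of_int (i - 1) *\<^sub>R axis j 1) + axis j 1)"
    using assms by (simp add: periodic_fun_def)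
  also have "\<dots> = f (x + of_int i *\<^sub>R axis j 1)"
    by (simp add: algebra_simps)
  finally show ?case using step2 by simp
qed simp

lemma periodic_fun_add_int_combination:
  assumes "periodic_fun f" "finite S"
  shows "f (x + (\<Sum>j\<in>S. of_int (k j) *\<^sub>R axis j 1)) = f x"
  using assms(2)
proof (induction S rule: finite_induct)
  case (insert i S)
  have "f (x + (\<Sum>j\<in>insert i S. of_int (k j) *\<^sub>R axis j 1))
      = f ((x + (\<Sum>j\<in>S. of_int (k j) *\<^sub>R axis j 1)) + of_int (k i) *\<^sub>R axis i 1)"
    using insert by (simp add: algebra_simps)
  also have "\<dots> = f (x + (\<Sum>j\<in>S. of_int (k j) *\<^sub>R axis j 1))"
    by (rule periodic_fun_add_int_axis[OF assms(1)])
  finally show ?case using insert.IH by simp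
qed simp

lemma periodic_fun_unit_cube_rep:
  fixes f :: "real^'d \<Rightarrow> 'b"
  assumes "periodic_fun f"
  shows "\<exists>y\<in>cbox (vec 0) (vec 1). f y = f x"
proof
  define v :: "real^'d" where "v = (\<chi> i. of_int \<lfloor>x $ i\<rfloor>)"
  have "(\<Sum>j\<in>UNIV. of_int \<lfloor>x $ j\<rfloor> *\<^sub>R axis j 1) = v"
    using basis_expansion[of v] unfolding scalar_mult_eq_scaleR by (simp add: v_def)
  then have "f ((x - v) + (\<Sum>j\<in>UNIV. of_int \<lfloor>x $ j\<rfloor> *\<^sub>R axis j 1)) = f x"
    by simp
  then show "f (x - v) = f x"
    using periodic_fun_add_int_combination[OF assms, of UNIV "x - v"] by simp
  have "0 \<le> x $ i - of_int \<lfloor>x $ i\<rfloor> \<and> x $ i - of_int \<lfloor>x $ i\<rfloor> \<le> 1" for i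
    using floor_correct[of "x $ i"] by linarith
  then show "x - v \<in> cbox (vec 0) (vec 1)"
    unfolding mem_box_cart v_def by simp
qed

lemma periodic_fun_attains_max:
  fixes f :: "real^'d \<Rightarrow> real"
  assumes "periodic_fun f" "continuous_on UNIV f"
  shows "\<exists>x0. \<forall>x. f x \<le> f x0"
proof -
  have "vec 0 \<in> cbox (vec 0) (vec 1 :: real^'d)" by (simp add: mem_box_cart)
  then obtain x0 where "\<forall>y\<in>cbox (vec 0) (vec 1). f y \<le> f x0"
    using continuous_attains_sup[OF compact_cbox _ continuous_on_subset[OF assms(2)]] by blast
  then show ?thesis
    using periodic_fun_unit_cube_rep[OF assms(1)] by metis
qed

lemma periodic_fun_attains_min:
  fixes f :: "real^'d \<Rightarrow> real"
  assumes "periodic_fun f" "continuous_on UNIV f"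
  shows "\<exists>x0. \<forall>x. f x0 \<le> f x"
proof -
  have "periodic_fun (\<lambda>x. - f x)" using assms(1) by (simp add: periodic_fun_def)
  moreover have "continuous_on UNIV (\<lambda>x. - f x)" using assms(2) by (intro continuous_intros)
  ultimately show ?thesis using periodic_fun_attains_max by fastforce
qed

lemma second_derivative_nonpos_at_max:
  fixes f f' :: "real \<Rightarrow> real"
  assumes f': "\<And>h. (f has_real_derivative f' h) (at h)"
    and f'': "(f' has_real_derivative d) (at 0)"
    and max: "\<And>h. f h \<le> f 0"
  shows "d \<le> 0"
proof (rule ccontr)
  assume "\<not> d \<le> 0"
  have "f' 0 = 0"
    using DERIV_local_max[OF f'[of 0], of 1] max by auto
  obtain \<delta> where \<delta>: "\<delta> > 0" "\<And>h. 0 < h \<Longrightarrow> h < \<delta> \<Longrightarrow> f' 0 < f' (0 + h)"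
    using DERIV_pos_inc_right[OF f''] \<open>\<not> d \<le> 0\<close> by auto
  obtain z where z: "0 < z" "z < \<delta>/2" "f (\<delta>/2) - f 0 = (\<delta>/2 - 0) * f' z"
    using MVT2[of 0 "\<delta>/2" f f'] f' \<delta>(1) by auto
  have "0 < f' z" using \<delta>(2)[of z] z(1,2) \<open>f' 0 = 0\<close> by simp
  then have "0 < (\<delta>/2 - 0) * f' z" using \<delta>(1) by simp
  then have "0 < f (\<delta>/2) - f 0" using z(3) by linarith
  then show False using max[of "\<delta>/2"] by simp
qed

lemma has_real_derivative_along_line:
  fixes w :: "'a::real_normed_vector \<Rightarrow> real"
  assumes "\<And>y. ((\<lambda>h. w (y + h *\<^sub>R e)) has_real_derivative Dw y) (at 0)"
  shows "((\<lambda>h. w (x + h *\<^sub>R e)) has_real_derivative Dw (x + h *\<^sub>R e)) (at h)"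
proof -
  have "(\<lambda>h'. w ((x + h *\<^sub>R e) + h' *\<^sub>R e)) = (\<lambda>h'. w (x + (h' + h) *\<^sub>R e))"
    by (simp add: algebra_simps)
  then show ?thesis
    using assms[of "x + h *\<^sub>R e"] DERIV_shift[of "\<lambda>h. w (x + h *\<^sub>R e)" "Dw (x + h *\<^sub>R e)" 0 h]
    by simp
qed

lemma heat_eq_at_combination_at_max:
  fixes f1 f2 w1 w2 :: "real \<Rightarrow> real^'d \<Rightarrow> real"
  assumes "heat_eq_at f1 w1 T t x" "heat_eq_at f2 w2 T t x"
    and max: "\<And>y. \<alpha> * w1 t y + \<beta> * w2 t y \<le> \<alpha> * w1 t x + \<beta> * w2 t x"
  obtains D1 D2 where "((\<lambda>s. f1 s x) has_real_derivative D1) (at t within {0..<T})"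
    "((\<lambda>s. f2 s x) has_real_derivative D2) (at t within {0..<T})" "\<alpha> * D1 + \<beta> * D2 \<le> 0"
proof -
  obtain D1 Dw1 D2w1 where
    f1: "((\<lambda>s. f1 s x) has_real_derivative D1) (at t within {0..<T})" and
    Dw1: "\<And>j y. ((\<lambda>h. w1 t (y + h *\<^sub>R axis j 1)) has_real_derivative Dw1 j y) (at 0)" and
    D2w1: "\<And>j. ((\<lambda>h. Dw1 j (x + h *\<^sub>R axis j 1)) has_real_derivative D2w1 j) (at 0)" and
    D1: "D1 = (\<Sum>j\<in>UNIV. D2w1 j)"
    using assms(1) unfolding heat_eq_at_def by blast
  obtain D2 Dw2 D2w2 where
    f2: "((\<lambda>s. f2 s x) has_real_derivative D2) (at t within {0..<T})" and
    Dw2: "\<And>j y. ((\<lambda>h. w2 t (y + h *\<^sub>R axis j 1)) has_real_derivative Dw2 j y) (at 0)" and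
    D2w2: "\<And>j. ((\<lambda>h. Dw2 j (x + h *\<^sub>R axis j 1)) has_real_derivative D2w2 j) (at 0)" and
    D2: "D2 = (\<Sum>j\<in>UNIV. D2w2 j)"
    using assms(2) unfolding heat_eq_at_def by blast
  have "\<alpha> * D2w1 j + \<beta> * D2w2 j \<le> 0" for j
  proof (rule second_derivative_nonpos_at_max[where
        f = "\<lambda>h. \<alpha> * w1 t (x + h *\<^sub>R axis j 1) + \<beta> * w2 t (x + h *\<^sub>R axis j 1)" and
        f' = "\<lambda>h. \<alpha> * Dw1 j (x + h *\<^sub>R axis j 1) + \<beta> * Dw2 j (x + h *\<^sub>R axis j 1)"])
    show "((\<lambda>h. \<alpha> * w1 t (x + h *\<^sub>R axis j 1) + \<beta> * w2 t (x + h *\<^sub>R axis j 1)) has_real_derivative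
        \<alpha> * Dw1 j (x + h *\<^sub>R axis j 1) + \<beta> * Dw2 j (x + h *\<^sub>R axis j 1)) (at h)" for h
      by (intro DERIV_add DERIV_cmult has_real_derivative_along_line[OF Dw1]
            has_real_derivative_along_line[OF Dw2])
    show "((\<lambda>h. \<alpha> * Dw1 j (x + h *\<^sub>R axis j 1) + \<beta> * Dw2 j (x + h *\<^sub>R axis j 1)) has_real_derivative
        \<alpha> * D2w1 j + \<beta> * D2w2 j) (at 0)"
      by (intro DERIV_add DERIV_cmult D2w1 D2w2)
    show "\<alpha> * w1 t (x + h *\<^sub>R axis j 1) + \<beta> * w2 t (x + h *\<^sub>R axis j 1)
        \<le> \<alpha> * w1 t (x + 0 *\<^sub>R axis j 1) + \<beta> * w2 t (x + 0 *\<^sub>R axis j 1)" for h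
      using max by simp
  qed
  then have "\<alpha> * D1 + \<beta> * D2 \<le> 0"
    unfolding D1 D2 sum_distrib_left sum.distrib[symmetric] by (rule sum_nonpos)
  with f1 f2 show ?thesis by (rule that)
qed

lemma left_derivative_ge_slope:
  fixes \<phi> :: "real \<Rightarrow> real"
  assumes D: "(\<phi> has_real_derivative D) (at t within {0..<T})" and t: "0 < t" "t < T"
    and slope: "\<And>s. 0 \<le> s \<Longrightarrow> s \<le> t \<Longrightarrow> \<phi> s - \<epsilon> * s \<le> \<phi> t - \<epsilon> * t"
  shows "\<epsilon> \<le> D"
proof -
  have "(\<phi> has_real_derivative D) (at t within {0..t})"
    using D by (rule DERIV_subset) (use t in auto)
  then have "((\<lambda>s. (\<phi> s - \<phi> t) / (s - t)) \<longlongrightarrow> D) (at_left t)"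
    unfolding has_field_derivative_iff at_within_Icc_at_left[OF t(1)] .
  moreover have "\<forall>\<^sub>F s in at_left t. \<epsilon> \<le> (\<phi> s - \<phi> t) / (s - t)"
    unfolding at_within_Icc_at_left[OF t(1), symmetric] eventually_at_filter
  proof (rule always_eventually, intro allI impI)
    fix s assume "s \<noteq> t" "s \<in> {0..t}"
    then have "s - t < 0" "\<phi> s - \<phi> t \<le> \<epsilon> * (s - t)"
      using slope[of s] by (auto simp: algebra_simps)
    then show "\<epsilon> \<le> (\<phi> s - \<phi> t) / (s - t)"
      by (simp add: neg_le_divide_eq)
  qed
  ultimately show ?thesis by (rule tendsto_lowerbound) simp
qed

lemma periodic_fun_attains_max_on_strip:
  fixes v :: "real \<Rightarrow> real^'d \<Rightarrow> real"
  assumes cont: "continuous_on ({0..t} \<times> UNIV) (\<lambda>p. v (fst p) (snd p))"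
    and per: "\<And>s. s \<in> {0..t} \<Longrightarrow> periodic_fun (v s)" and "0 \<le> t"
  shows "\<exists>t1 x1. t1 \<in> {0..t} \<and> (\<forall>s\<in>{0..t}. \<forall>y. v s y \<le> v t1 x1)"
proof -
  define K where "K = {0..t} \<times> cbox (vec 0) (vec 1 :: real^'d)"
  have "compact K" unfolding K_def by (intro compact_Times compact_Icc compact_cbox)
  moreover have "(0, vec 0) \<in> K" using \<open>0 \<le> t\<close> by (simp add: K_def mem_box_cart)
  then have "K \<noteq> {}" by blast
  moreover have "continuous_on K (\<lambda>p. v (fst p) (snd p))"
    by (rule continuous_on_subset[OF cont]) (auto simp: K_def)
  ultimately obtain t1 x1 where "(t1, x1) \<in> K" and max_K: "\<And>q. q \<in> K \<Longrightarrow> v (fst q) (snd q) \<le> v t1 x1"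
    using continuous_attains_sup[of K] by fastforce
  have "v s y \<le> v t1 x1" if s: "s \<in> {0..t}" for s y
  proof -
    obtain y' where "y' \<in> cbox (vec 0) (vec 1)" "v s y' = v s y"
      using periodic_fun_unit_cube_rep[OF per[OF s]] by blast
    then show ?thesis using max_K[of "(s, y')"] s by (simp add: K_def)
  qed
  moreover have "t1 \<in> {0..t}" using \<open>(t1, x1) \<in> K\<close> by (simp add: K_def)
  ultimately show ?thesis by blast
qed

text \<open>If the bound failed at time \<open>t\<close>, then for small \<open>\<epsilon> > 0\<close> the maximum of \<open>u s y - \<epsilon> s\<close> over
  \<open>[0, t]\<close> times the torus would be attained at a time \<open>t\<^sub>1 > 0\<close> and a spatial maximum point of \<open>u t\<^sub>1\<close>,
  where the left time derivative of \<open>u\<close> is at least \<open>\<epsilon>\<close>.\<close>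
lemma periodic_max_principle:
  fixes u :: "real \<Rightarrow> real^'d \<Rightarrow> real"
  assumes cont: "continuous_on ({0..<T} \<times> UNIV) (\<lambda>p. u (fst p) (snd p))"
    and per: "\<And>t. t \<in> {0..<T} \<Longrightarrow> periodic_fun (u t)"
    and init: "\<And>x. u 0 x \<le> M"
    and deriv: "\<And>t x. 0 < t \<Longrightarrow> t < T \<Longrightarrow> (\<And>y. u t y \<le> u t x) \<Longrightarrow>
        \<exists>D. ((\<lambda>s. u s x) has_real_derivative D) (at t within {0..<T}) \<and> D \<le> 0"
    and t: "t \<in> {0..<T}"
  shows "u t x \<le> M"
proof (rule ccontr)
  assume "\<not> u t x \<le> M"
  then have t0: "0 < t" using init[of x] t by (cases "t = 0") auto
  define \<epsilon> where "\<epsilon> = (u t x - M) / (2 * t)"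
  have \<epsilon>: "0 < \<epsilon>" "M < u t x - \<epsilon> * t"
    using \<open>\<not> u t x \<le> M\<close> t0 by (simp_all add: \<epsilon>_def field_simps)
  have "{0..t} \<times> UNIV \<subseteq> {0..<T} \<times> UNIV" using t by auto
  then have "continuous_on ({0..t} \<times> UNIV) (\<lambda>p. u (fst p) (snd p) - \<epsilon> * fst p)"
    by (intro continuous_intros continuous_on_subset[OF cont])
  moreover have "periodic_fun (\<lambda>y. u s y - \<epsilon> * s)" if "s \<in> {0..t}" for s
    using per[of s] that t by (simp add: periodic_fun_def)
  ultimately obtain t1 x1 where t1: "t1 \<in> {0..t}"
    and max_strip: "\<forall>s\<in>{0..t}. \<forall>y. u s y - \<epsilon> * s \<le> u t1 x1 - \<epsilon> * t1"
    using periodic_fun_attains_max_on_strip[of t "\<lambda>s y. u s y - \<epsilon> * s"] t0 by auto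
  have max: "u s y - \<epsilon> * s \<le> u t1 x1 - \<epsilon> * t1" if "0 \<le> s" "s \<le> t" for s y
    using max_strip that by simp
  have "M < u t1 x1 - \<epsilon> * t1" using max[of t x] \<epsilon>(2) t0 by simp
  then have "0 < t1" using init[of x1] t1 by (cases "t1 = 0") auto
  moreover have "t1 < T" using t1 t by simp
  moreover have "u t1 y \<le> u t1 x1" for y using max[of t1 y] t1 by simp
  ultimately obtain D where D: "((\<lambda>s. u s x1) has_real_derivative D) (at t1 within {0..<T})" "D \<le> 0"
    using deriv by blast
  have "\<epsilon> \<le> D"
    using left_derivative_ge_slope[OF D(1) \<open>0 < t1\<close> \<open>t1 < T\<close>] max t1 by simp
  then show False using \<open>D \<le> 0\<close> \<epsilon>(1) by simp
qed

section \<open>The species-blind system\<close>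

lemma flux_sum:
  assumes "\<forall>k\<ge>1. g k > 0" "0 < rho_c g"
  shows "flux g a (a + b) + flux g b (a + b) = Phig g (a + b)"
proof (cases "a + b = 0")
  case True
  then show ?thesis using Phig_zero[OF assms] by (simp add: flux_def flip: distrib_left)
next
  case False
  then show ?thesis by (simp add: flux_def flip: add_divide_distrib distrib_right)
qed

lemma flux_concentration_combination:
  assumes "a + b \<noteq> 0"
  shows "(1 - c) * flux g a (a + b) + (- c) * flux g b (a + b)
           = (a - c * (a + b)) * (Phig g (a + b) / (a + b))"
proof -
  have "(1 - c) * (a * P / S) + (- c) * (b * P / S) = (a - c * (a + b)) * (P / S)" if "S \<noteq> 0" for P S
    using that by (simp add: field_simps)
  then show ?thesis using assms by (simp add: flux_def)
qed

lemma lower_bound_from_fraction: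
  fixes a s c m :: real
  assumes "0 < s" "a / s \<le> c" "c < 1" "m \<le> s"
  shows "(1 - c) * m \<le> s - a"
proof -
  have "a \<le> c * s" using assms(1,2) by (simp add: divide_le_eq)
  moreover have "(1 - c) * m \<le> (1 - c) * s" using assms(3,4) by simp
  ultimately show ?thesis by (simp add: algebra_simps)
qed

lemma admissible_swap: "(a, b) \<in> admissible g \<longleftrightarrow> (b, a) \<in> admissible g"
  by (auto simp: admissible_def add.commute)

locale species_blind =
  fixes g :: "nat \<Rightarrow> real" and T :: real and rho1 rho2 :: "real \<Rightarrow> real^'d \<Rightarrow> real"
  assumes rate_pos: "\<forall>k\<ge>1. g k > 0"
    and solution: "species_blind_solution g T rho1 rho2"
begin

lemma total_density_range:
  "t \<in> {0..<T} \<Longrightarrow> 0 \<le> rho1 t x + rho2 t x \<and> ereal (rho1 t x + rho2 t x) < rho_c g"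
  using solution by (simp add: species_blind_solution_def)

lemma heat_eq_rho1:
  "t \<in> {0..<T} \<Longrightarrow> heat_eq_at rho1 (\<lambda>s y. flux g (rho1 s y) (rho1 s y + rho2 s y)) T t x"
  using solution by (simp add: species_blind_solution_def)

lemma heat_eq_rho2:
  "t \<in> {0..<T} \<Longrightarrow> heat_eq_at rho2 (\<lambda>s y. flux g (rho2 s y) (rho1 s y + rho2 s y)) T t x"
  using solution by (simp add: species_blind_solution_def)

lemma
  shows periodic_rho1: "t \<in> {0..<T} \<Longrightarrow> periodic_fun (rho1 t)"
    and periodic_rho2: "t \<in> {0..<T} \<Longrightarrow> periodic_fun (rho2 t)"
    and continuous_on_rho1: "continuous_on ({0..<T} \<times> UNIV) (\<lambda>p. rho1 (fst p) (snd p))"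
    and continuous_on_rho2: "continuous_on ({0..<T} \<times> UNIV) (\<lambda>p. rho2 (fst p) (snd p))"
  using solution by (auto simp: species_blind_solution_def C12_def case_prod_beta')

lemma swap: "species_blind g T rho2 rho1"
proof
  show "species_blind_solution g T rho2 rho1"
    using solution unfolding species_blind_solution_def by (simp add: add.commute)
qed (rule rate_pos)

lemma rho_c_pos: "t \<in> {0..<T} \<Longrightarrow> 0 < rho_c g"
  using total_density_range[of t 0] by (auto intro: le_less_trans[of 0 "ereal (rho1 t 0 + rho2 t 0)"])

lemma total_flux_eq:
  "t \<in> {0..<T} \<Longrightarrow> flux g (rho1 t y) (rho1 t y + rho2 t y) + flux g (rho2 t y) (rho1 t y + rho2 t y)
     = Phig g (rho1 t y + rho2 t y)"
  by (intro flux_sum rate_pos rho_c_pos)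

lemma Phig_total_density_mono:
  assumes "t \<in> {0..<T}" "rho1 t y + rho2 t y \<le> rho1 t x + rho2 t x"
  shows "Phig g (rho1 t y + rho2 t y) \<le> Phig g (rho1 t x + rho2 t x)"
  using assms total_density_range[of t y] total_density_range[of t x] by (intro Phig_mono rate_pos) auto

lemma total_density_le:
  assumes init: "\<And>x. rho1 0 x + rho2 0 x \<le> M" and t: "t \<in> {0..<T}"
  shows "rho1 t x + rho2 t x \<le> M"
proof (rule periodic_max_principle[where u = "\<lambda>t x. rho1 t x + rho2 t x", OF _ _ init _ t])
  show "continuous_on ({0..<T} \<times> UNIV) (\<lambda>p. rho1 (fst p) (snd p) + rho2 (fst p) (snd p))"
    by (intro continuous_intros continuous_on_rho1 continuous_on_rho2)
  show "periodic_fun (\<lambda>x. rho1 t x + rho2 t x)" if "t \<in> {0..<T}" for t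
    using periodic_rho1[OF that] periodic_rho2[OF that] by (simp add: periodic_fun_def)
next
  fix t x assume "0 < t" "t < T" and max: "\<And>y. rho1 t y + rho2 t y \<le> rho1 t x + rho2 t x"
  then have t: "t \<in> {0..<T}" by simp
  have "1 * flux g (rho1 t y) (rho1 t y + rho2 t y) + 1 * flux g (rho2 t y) (rho1 t y + rho2 t y)
      \<le> 1 * flux g (rho1 t x) (rho1 t x + rho2 t x) + 1 * flux g (rho2 t x) (rho1 t x + rho2 t x)" for y
    using Phig_total_density_mono[OF t max] by (simp add: total_flux_eq[OF t])
  then obtain D1 D2 where "((\<lambda>s. rho1 s x) has_real_derivative D1) (at t within {0..<T})"
      "((\<lambda>s. rho2 s x) has_real_derivative D2) (at t within {0..<T})" "1 * D1 + 1 * D2 \<le> 0"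
    by (rule heat_eq_at_combination_at_max[OF heat_eq_rho1[OF t] heat_eq_rho2[OF t]])
  then show "\<exists>D. ((\<lambda>s. rho1 s x + rho2 s x) has_real_derivative D) (at t within {0..<T}) \<and> D \<le> 0"
    by (intro exI[of _ "D1 + D2"] conjI DERIV_add) simp_all
qed

lemma total_density_ge:
  assumes init: "\<And>x. M \<le> rho1 0 x + rho2 0 x" and t: "t \<in> {0..<T}"
  shows "M \<le> rho1 t x + rho2 t x"
proof -
  have "- (rho1 t x + rho2 t x) \<le> - M"
  proof (rule periodic_max_principle[where u = "\<lambda>t x. - (rho1 t x + rho2 t x)", OF _ _ _ _ t])
    show "continuous_on ({0..<T} \<times> UNIV) (\<lambda>p. - (rho1 (fst p) (snd p) + rho2 (fst p) (snd p)))"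
      by (intro continuous_intros continuous_on_rho1 continuous_on_rho2)
    show "periodic_fun (\<lambda>x. - (rho1 t x + rho2 t x))" if "t \<in> {0..<T}" for t
      using periodic_rho1[OF that] periodic_rho2[OF that] by (simp add: periodic_fun_def)
    show "- (rho1 0 x + rho2 0 x) \<le> - M" for x
      using init[of x] by simp
  next
    fix t x assume "0 < t" "t < T" and min: "\<And>y. - (rho1 t y + rho2 t y) \<le> - (rho1 t x + rho2 t x)"
    then have t: "t \<in> {0..<T}" by simp
    have "(- 1) * flux g (rho1 t y) (rho1 t y + rho2 t y) + (- 1) * flux g (rho2 t y) (rho1 t y + rho2 t y)
        \<le> (- 1) * flux g (rho1 t x) (rho1 t x + rho2 t x) + (- 1) * flux g (rho2 t x) (rho1 t x + rho2 t x)"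
      for y
    proof -
      have "Phig g (rho1 t x + rho2 t x) \<le> Phig g (rho1 t y + rho2 t y)"
        using min[of y] by (intro Phig_total_density_mono[OF t]) simp
      then show ?thesis using total_flux_eq[OF t, of x] total_flux_eq[OF t, of y] by simp
    qed
    then obtain D1 D2 where "((\<lambda>s. rho1 s x) has_real_derivative D1) (at t within {0..<T})"
        "((\<lambda>s. rho2 s x) has_real_derivative D2) (at t within {0..<T})" "(- 1) * D1 + (- 1) * D2 \<le> 0"
      by (rule heat_eq_at_combination_at_max[OF heat_eq_rho1[OF t] heat_eq_rho2[OF t]])
    then show "\<exists>D. ((\<lambda>s. - (rho1 s x + rho2 s x)) has_real_derivative D) (at t within {0..<T}) \<and> D \<le> 0"
      by (intro exI[of _ "- (D1 + D2)"] conjI DERIV_minus DERIV_add) simp_all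
  qed
  then show ?thesis by simp
qed

lemma concentration_flux_le_at_max:
  assumes t: "t \<in> {0..<T}" and pos: "\<And>y. 0 < rho1 t y + rho2 t y"
    and max: "\<And>y. rho1 t y / (rho1 t y + rho2 t y) \<le> c" and at_x: "rho1 t x = c * (rho1 t x + rho2 t x)"
  shows "(1 - c) * flux g (rho1 t y) (rho1 t y + rho2 t y) + (- c) * flux g (rho2 t y) (rho1 t y + rho2 t y)
      \<le> (1 - c) * flux g (rho1 t x) (rho1 t x + rho2 t x) + (- c) * flux g (rho2 t x) (rho1 t x + rho2 t x)"
proof -
  have flux: "(1 - c) * flux g (rho1 t z) (rho1 t z + rho2 t z) + (- c) * flux g (rho2 t z) (rho1 t z + rho2 t z)
      = (rho1 t z - c * (rho1 t z + rho2 t z)) * (Phig g (rho1 t z + rho2 t z) / (rho1 t z + rho2 t z))" for z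
    using pos[of z] by (intro flux_concentration_combination) simp
  have "rho1 t y - c * (rho1 t y + rho2 t y) \<le> 0"
    using max[of y] pos[of y] by (simp add: divide_le_eq algebra_simps)
  moreover have "0 \<le> Phig g (rho1 t y + rho2 t y) / (rho1 t y + rho2 t y)"
    using pos[of y] Phig_nonneg[OF rate_pos] total_density_range[OF t, of y] by simp
  ultimately have "(rho1 t y - c * (rho1 t y + rho2 t y))
      * (Phig g (rho1 t y + rho2 t y) / (rho1 t y + rho2 t y)) \<le> 0"
    by (rule mult_nonpos_nonneg)
  then show ?thesis
    unfolding flux using at_x by simp
qed

text \<open>At a spatial maximum \<open>x\<close> of the concentration \<open>c = \<rho>\<^sub>1 / (\<rho>\<^sub>1 + \<rho>\<^sub>2)\<close>, the flux of the
  combination \<open>(1 - c(x)) \<rho>\<^sub>1 - c(x) \<rho>\<^sub>2\<close> is \<open>(\<rho>\<^sub>1 - c(x) s) \<Phi>(s) / s \<le> 0\<close>, with equality at \<open>x\<close>.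
  So that flux is maximal at \<open>x\<close>, and the time derivative of the combination, which at \<open>x\<close>
  equals \<open>s \<partial>\<^sub>t c\<close>, is nonpositive.\<close>
lemma concentration_le:
  assumes pos: "\<And>t x. t \<in> {0..<T} \<Longrightarrow> 0 < rho1 t x + rho2 t x"
    and init: "\<And>x. rho1 0 x / (rho1 0 x + rho2 0 x) \<le> M" and t: "t \<in> {0..<T}"
  shows "rho1 t x / (rho1 t x + rho2 t x) \<le> M"
proof (rule periodic_max_principle[where u = "\<lambda>t x. rho1 t x / (rho1 t x + rho2 t x)", OF _ _ init _ t])
  show "continuous_on ({0..<T} \<times> UNIV)
      (\<lambda>p. rho1 (fst p) (snd p) / (rho1 (fst p) (snd p) + rho2 (fst p) (snd p)))"
    using pos by (intro continuous_intros continuous_on_rho1 continuous_on_rho2)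
      (auto simp: less_imp_neq[symmetric])
  show "periodic_fun (\<lambda>x. rho1 t x / (rho1 t x + rho2 t x))" if "t \<in> {0..<T}" for t
    using periodic_rho1[OF that] periodic_rho2[OF that] by (simp add: periodic_fun_def)
next
  fix t x assume "0 < t" "t < T"
    and max: "\<And>y. rho1 t y / (rho1 t y + rho2 t y) \<le> rho1 t x / (rho1 t x + rho2 t x)"
  then have t: "t \<in> {0..<T}" by simp
  define S where "S y = rho1 t y + rho2 t y" for y
  define c where "c = rho1 t x / S x"
  have S: "0 < S y" for y using pos[OF t] by (simp add: S_def)
  have "rho1 t x = c * (rho1 t x + rho2 t x)" using S[of x] by (simp add: c_def S_def)
  with t pos[OF t] max have
    "(1 - c) * flux g (rho1 t y) (rho1 t y + rho2 t y) + (- c) * flux g (rho2 t y) (rho1 t y + rho2 t y)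
      \<le> (1 - c) * flux g (rho1 t x) (rho1 t x + rho2 t x) + (- c) * flux g (rho2 t x) (rho1 t x + rho2 t x)"
    for y
    by (intro concentration_flux_le_at_max) (simp_all add: c_def S_def)
  then obtain D1 D2 where D: "((\<lambda>s. rho1 s x) has_real_derivative D1) (at t within {0..<T})"
      "((\<lambda>s. rho2 s x) has_real_derivative D2) (at t within {0..<T})" "(1 - c) * D1 + (- c) * D2 \<le> 0"
    by (rule heat_eq_at_combination_at_max[OF heat_eq_rho1[OF t] heat_eq_rho2[OF t]])
  have "((\<lambda>s. rho1 s x / (rho1 s x + rho2 s x)) has_real_derivative
      (D1 * S x - rho1 t x * (D1 + D2)) / (S x * S x)) (at t within {0..<T})"
    using DERIV_divide[OF D(1) DERIV_add[OF D(1,2)]] S[of x] by (simp add: S_def)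
  moreover have "D1 * S x - rho1 t x * (D1 + D2) = S x * ((1 - c) * D1 + (- c) * D2)"
    using S[of x] by (simp add: c_def algebra_simps)
  then have "(D1 * S x - rho1 t x * (D1 + D2)) / (S x * S x) \<le> 0"
    using S[of x] D(3) by (simp add: divide_nonpos_pos mult_nonneg_nonpos)
  ultimately show "\<exists>D. ((\<lambda>s. rho1 s x / (rho1 s x + rho2 s x)) has_real_derivative D) (at t within {0..<T})
      \<and> D \<le> 0"
    by blast
qed

context
  assumes T: "0 < T"
    and continuous_initial: "continuous_on UNIV (rho1 0)" "continuous_on UNIV (rho2 0)"
    and admissible_initial: "\<And>x. (rho1 0 x, rho2 0 x) \<in> admissible g"
begin

lemma total_density_uniform_bounds:
  obtains ms Ms where "0 < ms" "ereal Ms < rho_c g"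
    "\<And>t x. t \<in> {0..<T} \<Longrightarrow> ms \<le> rho1 t x + rho2 t x \<and> rho1 t x + rho2 t x \<le> Ms"
proof -
  have "periodic_fun (\<lambda>x. rho1 0 x + rho2 0 x)"
    using periodic_rho1[of 0] periodic_rho2[of 0] T by (simp add: periodic_fun_def)
  moreover have "continuous_on UNIV (\<lambda>x. rho1 0 x + rho2 0 x)"
    using continuous_initial by (intro continuous_intros)
  ultimately obtain xm xM where
    xm: "\<And>x. rho1 0 xm + rho2 0 xm \<le> rho1 0 x + rho2 0 x" and
    xM: "\<And>x. rho1 0 x + rho2 0 x \<le> rho1 0 xM + rho2 0 xM"
    using periodic_fun_attains_min periodic_fun_attains_max by meson
  show ?thesis
  proof (rule that)
    show "0 < rho1 0 xm + rho2 0 xm" "ereal (rho1 0 xM + rho2 0 xM) < rho_c g"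
      using admissible_initial[of xm] admissible_initial[of xM] by (simp_all add: admissible_def)
    show "rho1 0 xm + rho2 0 xm \<le> rho1 t x + rho2 t x \<and> rho1 t x + rho2 t x \<le> rho1 0 xM + rho2 0 xM"
      if "t \<in> {0..<T}" for t x
      using total_density_ge[OF xm that] total_density_le[OF xM that] by simp
  qed
qed

lemma concentration_uniform_bound:
  assumes pos: "\<And>t x. t \<in> {0..<T} \<Longrightarrow> 0 < rho1 t x + rho2 t x"
  obtains M where "M < 1" "\<And>t x. t \<in> {0..<T} \<Longrightarrow> rho1 t x / (rho1 t x + rho2 t x) \<le> M"
proof -
  have "periodic_fun (\<lambda>x. rho1 0 x / (rho1 0 x + rho2 0 x))"
    using periodic_rho1[of 0] periodic_rho2[of 0] T by (simp add: periodic_fun_def)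
  moreover have "continuous_on UNIV (\<lambda>x. rho1 0 x / (rho1 0 x + rho2 0 x))"
    using continuous_initial pos[of 0] T by (intro continuous_intros) (auto simp: less_imp_neq[symmetric])
  ultimately obtain x1 where x1: "\<And>x. rho1 0 x / (rho1 0 x + rho2 0 x) \<le> rho1 0 x1 / (rho1 0 x1 + rho2 0 x1)"
    using periodic_fun_attains_max by meson
  show ?thesis
  proof (rule that)
    show "rho1 0 x1 / (rho1 0 x1 + rho2 0 x1) < 1"
      using admissible_initial[of x1] by (simp add: admissible_def)
  qed (rule concentration_le[OF pos x1])
qed

lemma uniform_interior_bounds:
  shows "\<exists>m Ms. 0 < m \<and> ereal Ms < rho_c g \<and>
    (\<forall>t\<in>{0..<T}. \<forall>x. m \<le> rho1 t x \<and> m \<le> rho2 t x \<and> rho1 t x + rho2 t x \<le> Ms)"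
proof -
  interpret swapped: species_blind g T rho2 rho1 by (rule swap)
  obtain ms Ms where ms: "0 < ms" "ereal Ms < rho_c g"
    and total: "\<And>t x. t \<in> {0..<T} \<Longrightarrow> ms \<le> rho1 t x + rho2 t x \<and> rho1 t x + rho2 t x \<le> Ms"
    using total_density_uniform_bounds by blast
  then have pos: "t \<in> {0..<T} \<Longrightarrow> 0 < rho1 t x + rho2 t x" for t x
    by (meson less_le_trans)
  obtain M1 where M1: "M1 < 1" "\<And>t x. t \<in> {0..<T} \<Longrightarrow> rho1 t x / (rho1 t x + rho2 t x) \<le> M1"
    using concentration_uniform_bound[OF pos] by blast
  have "(rho2 0 x, rho1 0 x) \<in> admissible g" for x
    using admissible_initial admissible_swap by blast
  moreover have "t \<in> {0..<T} \<Longrightarrow> 0 < rho2 t x + rho1 t x" for t x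
    using pos by (simp add: add.commute)
  ultimately obtain M2 where M2: "M2 < 1" "\<And>t x. t \<in> {0..<T} \<Longrightarrow> rho2 t x / (rho2 t x + rho1 t x) \<le> M2"
    using swapped.concentration_uniform_bound[OF T continuous_initial(2,1)] by blast
  define m where "m = min (1 - M1) (1 - M2) * ms"
  have "m \<le> rho1 t x \<and> m \<le> rho2 t x \<and> rho1 t x + rho2 t x \<le> Ms" if t: "t \<in> {0..<T}" for t x
  proof -
    have "m \<le> (1 - M2) * ms" "m \<le> (1 - M1) * ms"
      using ms(1) by (simp_all add: m_def mult_right_mono)
    moreover have "(1 - M2) * ms \<le> (rho2 t x + rho1 t x) - rho2 t x"
      using pos[OF t, of x] M2 total[OF t, of x] t by (intro lower_bound_from_fraction) (auto simp: add.commute)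
    moreover have "(1 - M1) * ms \<le> (rho1 t x + rho2 t x) - rho1 t x"
      using pos[OF t, of x] M1 total[OF t, of x] t by (intro lower_bound_from_fraction) auto
    ultimately show ?thesis using total[OF t, of x] by linarith
  qed
  moreover have "0 < m" using M1(1) M2(1) ms(1) by (simp add: m_def)
  ultimately show ?thesis using ms(2) by blast
qed

end

end

section \<open>The admissible set\<close>

lemma open_admissible: "open (admissible g)"
proof -
  have "admissible g = {p. 0 < fst p} \<inter> {p. 0 < snd p} \<inter> {p. ereal (fst p + snd p) < rho_c g}"
    by (auto simp: admissible_def)
  then show ?thesis by (simp add: open_Int open_Collect_less continuous_intros)
qed

lemma admissible_uniform_margin:
  assumes m: "0 < m" and M: "ereal M < rho_c g" and nonempty: "admissible g \<noteq> {}"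
  shows "\<exists>\<delta>>0. \<forall>r1 r2. m \<le> r1 \<longrightarrow> m \<le> r2 \<longrightarrow> r1 + r2 \<le> M \<longrightarrow>
           (r1, r2) \<in> admissible g \<and> \<delta> < infdist (r1, r2) (frontier (admissible g))"
proof -
  obtain R where R: "M < R" "ereal R < rho_c g"
    using ereal_dense2[OF M] by auto
  define b where "b = min m ((R - M) / 2)"
  have "0 < b" using m R(1) by (simp add: b_def)
  have frontier: "frontier (admissible g) \<noteq> {}"
    using nonempty by (intro frontier_not_empty) (auto simp: admissible_def)
  have far: "b \<le> dist (r1, r2) y"
    if r: "m \<le> r1" "m \<le> r2" "r1 + r2 \<le> M" and y: "y \<in> frontier (admissible g)" for r1 r2 y
  proof -
    have "y \<notin> admissible g"
      using y open_admissible by (simp add: frontier_def interior_open)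
    then have "fst y \<le> 0 \<or> snd y \<le> 0 \<or> \<not> ereal (fst y + snd y) < rho_c g"
      by (cases y) (auto simp: admissible_def)
    moreover have "R < fst y + snd y" if "\<not> ereal (fst y + snd y) < rho_c g"
      using less_le_trans[OF R(2), of "ereal (fst y + snd y)"] that by (simp add: not_less)
    moreover have "\<bar>r1 - fst y\<bar> \<le> dist (r1, r2) y" "\<bar>r2 - snd y\<bar> \<le> dist (r1, r2) y"
      using dist_fst_le[of "(r1, r2)" y] dist_snd_le[of "(r1, r2)" y] by (simp_all add: dist_real_def)
    ultimately have "m \<le> dist (r1, r2) y \<or> R - M \<le> 2 * dist (r1, r2) y"
      using r by linarith
    then show ?thesis by (auto simp: b_def min_le_iff_disj)
  qed
  have "(r1, r2) \<in> admissible g \<and> b / 2 < infdist (r1, r2) (frontier (admissible g))"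
    if r: "m \<le> r1" "m \<le> r2" "r1 + r2 \<le> M" for r1 r2
  proof
    have "ereal (r1 + r2) < rho_c g" using le_less_trans[OF _ M] r(3) by simp
    then show "(r1, r2) \<in> admissible g" using r m by (simp add: admissible_def)
    have "b \<le> infdist (r1, r2) (frontier (admissible g))"
      unfolding infdist_notempty[OF frontier] using far[OF r] by (intro cINF_greatest frontier) auto
    then show "b / 2 < infdist (r1, r2) (frontier (admissible g))" using \<open>0 < b\<close> by linarith
  qed
  then show ?thesis using \<open>0 < b\<close> by (intro exI[of _ "b / 2"]) auto
qed

lemma INF_min_SUP_add_bounds:
  fixes f1 f2 :: "'a \<Rightarrow> real"
  assumes "A \<noteq> {}" "0 \<le> m" and bounds: "\<And>p. p \<in> A \<Longrightarrow> m \<le> f1 p \<and> m \<le> f2 p \<and> f1 p + f2 p \<le> M"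
  shows "ereal m \<le> (INF p\<in>A. ereal (min (f1 p) (f2 p)))"
    and "(INF p\<in>A. ereal (min (f1 p) (f2 p))) \<le> (SUP p\<in>A. ereal (f1 p + f2 p))"
    and "(SUP p\<in>A. ereal (f1 p + f2 p)) \<le> ereal M"
proof -
  show "ereal m \<le> (INF p\<in>A. ereal (min (f1 p) (f2 p)))"
    using bounds by (intro INF_greatest) auto
  show "(SUP p\<in>A. ereal (f1 p + f2 p)) \<le> ereal M"
    using bounds by (intro SUP_least) auto
  obtain p where p: "p \<in> A" using assms(1) by blast
  have "min (f1 p) (f2 p) \<le> f1 p + f2 p" using bounds[OF p] assms(2) by (simp add: min_le_iff_disj)
  then show "(INF p\<in>A. ereal (min (f1 p) (f2 p))) \<le> (SUP p\<in>A. ereal (f1 p + f2 p))"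
    by (intro order_trans[OF INF_lower[OF p] SUP_upper2[OF p]]) (simp only: ereal_less_eq(3))
qed

theorem mainTheorem8:
  fixes g :: "nat \<Rightarrow> real" and T :: real
    and rho1 rho2 :: "real \<Rightarrow> real^'d \<Rightarrow> real"
    and rho01 rho02 :: "real^'d \<Rightarrow> real"
  assumes "jump_rate g"
    and "T > 0"
    and "species_blind_solution g T rho1 rho2"
    and "periodic_fun rho01" and "periodic_fun rho02"
    and "continuous_on UNIV rho01" and "continuous_on UNIV rho02"
    and "\<And>x. rho1 0 x = rho01 x" and "\<And>x. rho2 0 x = rho02 x"
    and "\<And>x. (rho01 x, rho02 x) \<in> admissible g"
  shows "0 < (INF p\<in>{0..<T} \<times> UNIV. ereal (min (rho1 (fst p) (snd p)) (rho2 (fst p) (snd p))))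
       \<and> (INF p\<in>{0..<T} \<times> UNIV. ereal (min (rho1 (fst p) (snd p)) (rho2 (fst p) (snd p))))
           \<le> (SUP p\<in>{0..<T} \<times> UNIV. ereal (rho1 (fst p) (snd p) + rho2 (fst p) (snd p)))
       \<and> (SUP p\<in>{0..<T} \<times> UNIV. ereal (rho1 (fst p) (snd p) + rho2 (fst p) (snd p))) < rho_c g
       \<and> (\<exists>\<delta>>0. \<forall>t\<in>{0..<T}. \<forall>x. (rho1 t x, rho2 t x) \<in> admissible g \<and>
              infdist (rho1 t x, rho2 t x) (frontier (admissible g)) > \<delta>)"
proof -
  interpret species_blind g T rho1 rho2
    using assms(1,3) by unfold_locales (simp_all add: jump_rate_def)
  have "rho1 0 = rho01" "rho2 0 = rho02" using assms(8,9) by auto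
  then obtain m Ms where m: "0 < m" "ereal Ms < rho_c g" and bounds:
      "\<forall>t\<in>{0..<T}. \<forall>x. m \<le> rho1 t x \<and> m \<le> rho2 t x \<and> rho1 t x + rho2 t x \<le> Ms"
    using uniform_interior_bounds[OF assms(2)] assms(6,7,10) by auto
  obtain \<delta> where "0 < \<delta>" and margin: "\<forall>r1 r2. m \<le> r1 \<longrightarrow> m \<le> r2 \<longrightarrow> r1 + r2 \<le> Ms \<longrightarrow>
      (r1, r2) \<in> admissible g \<and> \<delta> < infdist (r1, r2) (frontier (admissible g))"
    using admissible_uniform_margin[OF m] assms(10) by blast
  have "{0..<T} \<times> (UNIV :: (real^'d) set) \<noteq> {}" using assms(2) by simp
  note extrema = INF_min_SUP_add_bounds[OF this less_imp_le[OF m(1)],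
      of "\<lambda>p. rho1 (fst p) (snd p)" "\<lambda>p. rho2 (fst p) (snd p)" Ms]
  show ?thesis
    using extrema(1)[THEN less_le_trans[rotated]] extrema(2) extrema(3)[THEN le_less_trans] m \<open>0 < \<delta>\<close>
      bounds margin
    by (auto simp: mem_Times_iff)
qed

end
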